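(* Suppose that for every connected bipartite graph $H$ of even order and every weight function $w\colon V(H)\to\{0,1\}$, Alice wins the graph-grabbing game on $(H,w)$. Then for every connected graph $G$ of even order that has no induced subgraph isomorphic to a corona of an odd cycle and a point, and every weight function $w\colon V(G)\to\{0,1\}$, Alice wins the graph-grabbing game on $(G,w)$.
   Context: The graph-grabbing game is played by two players, Alice and Bob, on a connected graph $G$ with a weight function $w\colon V(G)\to\mathbb{R}_{\ge 0}$. Starting with Alice, the players alternately remove one vertex of the current graph, subject to the rule that the vertices remaining after each removal induce a connected subgraph of $G$ (the empty set counts as allowed at the end). When all vertices have been removed, each player's score is the total weight of the vertices that player removed; both players aim to maximise their own score. Alice is said to win on $(G,w)$ if she has a strategy guaranteeing her a score of at least half of $\sum_{v\in V(G)} w(v)$. The corona of an odd cycle and a point is the graph obtained from a cycle $x_1x_2\cdots x_r$ with $r\ge 3$ odd by adding $r$ new vertices $y_1,\dots,y_r$, with $y_i$ adjacent only to $x_i$ (i.e. each cycle vertex receives one pendant leaf). *)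

theory Defs
  imports Complex_Main
begin

definition simple_graph :: "'a set \<Rightarrow> ('a \<Rightarrow> 'a \<Rightarrow> bool) \<Rightarrow> bool" where
  "simple_graph V E \<longleftrightarrow> finite V \<and> (\<forall>x y. E x y \<longrightarrow> x \<in> V \<and> y \<in> V)
     \<and> (\<forall>x y. E x y \<longrightarrow> E y x) \<and> (\<forall>x. \<not> E x x)"

definition connected_on :: "('a \<Rightarrow> 'a \<Rightarrow> bool) \<Rightarrow> 'a set \<Rightarrow> bool" where
  "connected_on E S \<longleftrightarrow> S \<noteq> {} \<and>
     (\<forall>x\<in>S. \<forall>y\<in>S. (\<lambda>a b. a \<in> S \<and> b \<in> S \<and> E a b)\<^sup>*\<^sup>* x y)"

definition bipartite :: "'a set \<Rightarrow> ('a \<Rightarrow> 'a \<Rightarrow> bool) \<Rightarrow> bool" where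
  "bipartite V E \<longleftrightarrow> (\<exists>A. \<forall>x y. E x y \<longrightarrow> (x \<in> A \<longleftrightarrow> y \<notin> A))"

definition legal_move :: "('a \<Rightarrow> 'a \<Rightarrow> bool) \<Rightarrow> 'a set \<Rightarrow> 'a \<Rightarrow> bool" where
  "legal_move E S v \<longleftrightarrow> v \<in> S \<and> (S - {v} = {} \<or> connected_on E (S - {v}))"

text \<open>guarantees E w S k: the player about to move, with S the set of remaining
  vertices, has a strategy ensuring that the total weight of the vertices he removes
  from now on is at least k (whatever the opponent does).\<close>
inductive guarantees :: "('a \<Rightarrow> 'a \<Rightarrow> bool) \<Rightarrow> ('a \<Rightarrow> real) \<Rightarrow> 'a set \<Rightarrow> real \<Rightarrow> bool"
  for E w where
  empty: "k \<le> 0 \<Longrightarrow> guarantees E w {} k"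
| move: "\<lbrakk> legal_move E S v;
           S - {v} = {} \<Longrightarrow> k \<le> w v;
           \<And>u. \<lbrakk> S - {v} \<noteq> {}; legal_move E (S - {v}) u \<rbrakk>
                 \<Longrightarrow> guarantees E w (S - {v} - {u}) (k - w v) \<rbrakk>
         \<Longrightarrow> guarantees E w S k"

definition alice_wins :: "'a set \<Rightarrow> ('a \<Rightarrow> 'a \<Rightarrow> bool) \<Rightarrow> ('a \<Rightarrow> real) \<Rightarrow> bool" where
  "alice_wins V E w \<longleftrightarrow> guarantees E w V ((\<Sum>v\<in>V. w v) / 2)"

definition has_induced_odd_cycle_corona :: "'a set \<Rightarrow> ('a \<Rightarrow> 'a \<Rightarrow> bool) \<Rightarrow> bool" where
  "has_induced_odd_cycle_corona V E \<longleftrightarrow>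
    (\<exists>r::nat. \<exists>x y :: nat \<Rightarrow> 'a. odd r \<and> 3 \<le> r \<and>
       inj_on x {..<r} \<and> inj_on y {..<r} \<and> x ` {..<r} \<inter> y ` {..<r} = {} \<and>
       x ` {..<r} \<subseteq> V \<and> y ` {..<r} \<subseteq> V \<and>
       (\<forall>i<r. \<forall>j<r. E (x i) (x j) \<longleftrightarrow> (j = (i + 1) mod r \<or> i = (j + 1) mod r)) \<and>
       (\<forall>i<r. \<forall>j<r. E (x i) (y j) \<longleftrightarrow> i = j) \<and>
       (\<forall>i<r. \<forall>j<r. E (y i) (x j) \<longleftrightarrow> i = j) \<and>
       (\<forall>i<r. \<forall>j<r. \<not> E (y i) (y j)))"

end

theory Submission
  imports Defs
begin

text \<open>Induction over the even connected vertex sets S \<subseteq> V. If S induces a bipartite graph,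
  the hypothesis applies after relabelling its vertices by natural numbers. Otherwise S contains
  an induced odd cycle, and Alice can remove a vertex v such that every reply u of Bob has
  w u \<le> w v; the game then continues on the smaller even connected set S - {v, u}.
  Such a vertex exists: take a removable vertex of weight 1 if there is one, otherwise a removable
  vertex with two neighbours (every reply of Bob was then already removable, hence has weight 0).
  If neither exists, every cycle vertex x is a cut vertex of S, and a neighbour of x outside the
  component of S - {x} containing the rest of the cycle yields an induced corona of the cycle.\<close>

abbreviation edge_in :: "('a \<Rightarrow> 'a \<Rightarrow> bool) \<Rightarrow> 'a set \<Rightarrow> 'a \<Rightarrow> 'a \<Rightarrow> bool" where
  "edge_in E S \<equiv> (\<lambda>a b. a \<in> S \<and> b \<in> S \<and> E a b)"

lemma rtranclp_edge_in_sym: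
  assumes sym: "symp E" and "(edge_in E S)\<^sup>*\<^sup>* a b"
  shows "(edge_in E S)\<^sup>*\<^sup>* b a"
proof -
  have "symp (edge_in E S)" using sym by (auto intro: sympI dest: sympD)
  then show ?thesis using assms(2) by (metis symp_rtranclp sympD)
qed

lemma connected_on_insert:
  assumes sym: "symp E" and c: "connected_on E T"
    and z: "z \<in> T" and e: "E v z"
  shows "connected_on E (insert v T)"
proof -
  let ?R = "edge_in E (insert v T)"
  have mono: "?R\<^sup>*\<^sup>* a b" if "(edge_in E T)\<^sup>*\<^sup>* a b" for a b
    using that by (rule mono_rtranclp[rule_format, rotated]) auto
  have vz: "?R\<^sup>*\<^sup>* v z" and zv: "?R\<^sup>*\<^sup>* z v"
    using e z sympD[OF sym e] by (auto intro: r_into_rtranclp)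
  show ?thesis unfolding connected_on_def
  proof (intro conjI ballI)
    fix x y assume x: "x \<in> insert v T" and y: "y \<in> insert v T"
    have "?R\<^sup>*\<^sup>* x z" using x vz mono c z unfolding connected_on_def by auto
    moreover have "?R\<^sup>*\<^sup>* z y" using y zv mono c z unfolding connected_on_def by auto
    ultimately show "?R\<^sup>*\<^sup>* x y" by (rule rtranclp_trans)
  qed simp
qed

lemma cut_vertex_neighbour_outside_component:
  assumes c: "connected_on E S" and sym: "symp E"
    and x: "x \<in> S" and c0: "c0 \<in> S - {x}" and cut: "\<not> connected_on E (S - {x})"
  shows "\<exists>y \<in> S - {x}. E x y \<and> \<not> (edge_in E (S - {x}))\<^sup>*\<^sup>* c0 y"
proof -
  let ?R = "edge_in E (S - {x})"
  obtain a where a: "a \<in> S - {x}" "\<not> ?R\<^sup>*\<^sup>* c0 a"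
  proof -
    obtain a b where ab: "a \<in> S - {x}" "b \<in> S - {x}" "\<not> ?R\<^sup>*\<^sup>* a b"
      using cut c0 unfolding connected_on_def by blast
    then have "\<not> ?R\<^sup>*\<^sup>* c0 a \<or> \<not> ?R\<^sup>*\<^sup>* c0 b"
      using rtranclp_edge_in_sym[OF sym, where S="S - {x}" and a=c0 and b=a] by (meson rtranclp_trans)
    then show ?thesis using that ab by blast
  qed
  have "(z \<noteq> x \<and> ?R\<^sup>*\<^sup>* z a) \<or> (\<exists>y \<in> S - {x}. E x y \<and> ?R\<^sup>*\<^sup>* y a)"
    if "(edge_in E S)\<^sup>*\<^sup>* z a" for z
    using that
  proof (induction rule: converse_rtranclp_induct)
    case base then show ?case using a by auto
  next
    case (step z z')
    then show ?case by (cases "z = x") (auto intro: converse_rtranclp_into_rtranclp)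
  qed
  moreover have "(edge_in E S)\<^sup>*\<^sup>* x a" using c x a unfolding connected_on_def by blast
  ultimately obtain y where "y \<in> S - {x}" "E x y" "?R\<^sup>*\<^sup>* y a" by auto
  then show ?thesis using a by (meson rtranclp_trans)
qed

definition walk :: "('a \<Rightarrow> 'a \<Rightarrow> bool) \<Rightarrow> 'a set \<Rightarrow> nat \<Rightarrow> (nat \<Rightarrow> 'a) \<Rightarrow> 'a \<Rightarrow> 'a \<Rightarrow> bool" where
  "walk E S n f a b \<longleftrightarrow> f 0 = a \<and> f n = b \<and> (\<forall>i<n. edge_in E S (f i) (f (Suc i)))"

lemma walk_append:
  assumes f: "walk E S m f a b" and g: "walk E S n g b c"
  shows "walk E S (m + n) (\<lambda>i. if i \<le> m then f i else g (i - m)) a c"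
proof -
  let ?h = "\<lambda>i. if i \<le> m then f i else g (i - m)"
  have "edge_in E S (?h i) (?h (Suc i))" if i: "i < m + n" for i
  proof (cases "i < m")
    case True
    then show ?thesis using f by (auto simp: walk_def)
  next
    case False
    then have "Suc i - m = Suc (i - m)" "i - m < n" using i by auto
    moreover have "f m = g 0" using f g by (simp add: walk_def)
    ultimately show ?thesis using g False by (cases "i = m") (auto simp: walk_def)
  qed
  moreover have "?h (m + n) = c" using f g by (cases n) (auto simp: walk_def)
  ultimately show ?thesis using f by (simp add: walk_def)
qed

lemma walk_reverse:
  assumes sym: "symp E" and f: "walk E S n f a b"
  shows "walk E S n (\<lambda>i. f (n - i)) b a"
proof -
  have "edge_in E S (f (n - i)) (f (n - Suc i))" if "i < n" for i
  proof -
    have "n - i = Suc (n - Suc i)" using that by auto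
    moreover have "n - Suc i < n" using that by simp
    then have "edge_in E S (f (n - Suc i)) (f (Suc (n - Suc i)))"
      using f unfolding walk_def by blast
    ultimately show ?thesis using sympD[OF sym] by auto
  qed
  then show ?thesis using f by (simp add: walk_def)
qed

lemma walk_segment:
  "walk E S n f a b \<Longrightarrow> i \<le> j \<Longrightarrow> j \<le> n \<Longrightarrow> walk E S (j - i) (\<lambda>t. f (i + t)) (f i) (f j)"
  unfolding walk_def by auto

lemma walk_edge: "a \<in> S \<Longrightarrow> b \<in> S \<Longrightarrow> E a b \<Longrightarrow> walk E S 1 (\<lambda>i. if i = 0 then a else b) a b"
  unfolding walk_def by auto

lemma walk_refl: "walk E S 0 (\<lambda>i. a) a a"
  unfolding walk_def by auto

lemma rtranclp_imp_walk: "(edge_in E S)\<^sup>*\<^sup>* a b \<Longrightarrow> \<exists>n f. walk E S n f a b"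
proof (induction rule: rtranclp_induct)
  case (step y z)
  then obtain n f where "walk E S n f a y" by blast
  moreover have "walk E S 1 (\<lambda>i. if i = 0 then y else z) y z"
    using step(2) by (intro walk_edge) auto
  ultimately show ?case by (blast intro: walk_append)
qed (use walk_refl in fast)

lemma bipartite_or_odd_closed_walk:
  assumes sym: "symp E" and c: "connected_on E S"
  shows "bipartite S (edge_in E S) \<or> (\<exists>n f a. odd n \<and> walk E S n f a a)"
proof (rule disjCI)
  assume no_odd: "\<not> (\<exists>n f a. odd n \<and> walk E S n f a a)"
  obtain r where r: "r \<in> S" using c unfolding connected_on_def by auto
  have walk_from_r: "\<exists>n f. walk E S n f r x" if "x \<in> S" for x
    using c r that unfolding connected_on_def by (blast intro: rtranclp_imp_walk)
  have parity: "even m \<longleftrightarrow> odd n"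
    if "walk E S m f r x" "walk E S n g r y" "x \<in> S" "y \<in> S" "E x y" for m n f g x y
  proof -
    have "\<exists>h. walk E S (m + 1 + n) h r r"
      using walk_append[OF walk_append[OF that(1) walk_edge[of x S y E, OF that(3-5)]]
          walk_reverse[OF sym that(2)]]
      by blast
    then have "even (m + 1 + n)" using no_odd by blast
    then show ?thesis by simp
  qed
  define A where "A = {x. \<exists>n f. even n \<and> walk E S n f r x}"
  show "bipartite S (edge_in E S)" unfolding bipartite_def
  proof (intro exI allI impI)
    fix x y assume e: "edge_in E S x y"
    show "x \<in> A \<longleftrightarrow> y \<notin> A"
    proof
      assume "x \<in> A"
      then obtain m f where m: "even m" "walk E S m f r x" unfolding A_def by blast
      show "y \<notin> A"
      proof
        assume "y \<in> A"
        then obtain n g where "even n" "walk E S n g r y" unfolding A_def by blast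
        then show False using parity[OF m(2)] e m(1) by blast
      qed
    next
      assume y: "y \<notin> A"
      obtain m f where m: "walk E S m f r x" using walk_from_r e by blast
      obtain n g where n: "walk E S n g r y" using walk_from_r e by blast
      have "odd n" using y n unfolding A_def by blast
      then show "x \<in> A" using parity[OF m n] e m unfolding A_def by blast
    qed
  qed
qed

definition induced_odd_cycle :: "('a \<Rightarrow> 'a \<Rightarrow> bool) \<Rightarrow> 'a set \<Rightarrow> nat \<Rightarrow> (nat \<Rightarrow> 'a) \<Rightarrow> bool" where
  "induced_odd_cycle E S r X \<longleftrightarrow> odd r \<and> 3 \<le> r \<and> inj_on X {..<r} \<and> X ` {..<r} \<subseteq> S \<and>
     (\<forall>i<r. \<forall>j<r. E (X i) (X j) \<longleftrightarrow> (j = (i + 1) mod r \<or> i = (j + 1) mod r))"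

lemma induced_odd_cycleD:
  assumes "induced_odd_cycle E S r X"
  shows "odd r" "3 \<le> r" "inj_on X {..<r}" "\<And>i. i < r \<Longrightarrow> X i \<in> S"
    "\<And>i j. i < r \<Longrightarrow> j < r \<Longrightarrow> E (X i) (X j) \<longleftrightarrow> (j = Suc i mod r \<or> i = Suc j mod r)"
  using assms unfolding induced_odd_cycle_def by auto

text \<open>A walk from X i to X j splits the odd closed walk X into two closed walks of total
  length r + 2m, one of which is therefore odd.\<close>
lemma odd_closed_walk_shortcut:
  assumes sym: "symp E" and X: "walk E S r X b b" and "odd r"
    and ij: "i \<le> j" "j \<le> r" and g: "walk E S m g (X i) (X j)"
  shows "\<exists>n f c. odd n \<and> walk E S n f c c \<and> (n = j - i + m \<or> n = i + m + (r - j))"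
proof -
  have X0: "X 0 = b" "X r = b" using X unfolding walk_def by auto
  have "walk E S i X b (X i)" using walk_segment[OF X, of 0 i] ij X0 by simp
  moreover have "walk E S (r - j) (\<lambda>t. X (j + t)) (X j) b" using walk_segment[OF X, of j r] ij X0 by simp
  ultimately have "\<exists>h. walk E S (i + m + (r - j)) h b b" using walk_append[OF walk_append[OF _ g]] by blast
  moreover have "\<exists>h. walk E S (j - i + m) h (X i) (X i)"
    using walk_append[OF walk_segment[OF X ij] walk_reverse[OF sym g]] by blast
  moreover have "odd (j - i + m) \<or> odd (i + m + (r - j))" using \<open>odd r\<close> ij by presburger
  ultimately show ?thesis by blast
qed

lemma shortest_odd_closed_walk_induced_cycle:
  assumes sym: "symp E" and irr: "irreflp E"
    and X: "walk E S r X b b" and r: "odd r"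
    and shortest: "\<And>n f c. odd n \<Longrightarrow> walk E S n f c c \<Longrightarrow> r \<le> n"
  shows "induced_odd_cycle E S r X"
proof -
  have X0: "X 0 = b" "X r = b" and step: "\<And>i. i < r \<Longrightarrow> edge_in E S (X i) (X (Suc i))"
    using X unfolding walk_def by auto
  have "r \<noteq> 1" using step[of 0] X0 irreflpD[OF irr] by auto
  then have r3: "3 \<le> r" using r by presburger
  have "X i \<noteq> X j" if "i < j" "j < r" for i j
  proof
    assume "X i = X j"
    then have w: "walk E S 0 (\<lambda>_. X i) (X i) (X j)" using walk_refl by metis
    have "i \<le> j" "j \<le> r" using that by auto
    then obtain n f c where "odd n" "walk E S n f c c" "n = j - i + 0 \<or> n = i + 0 + (r - j)"
      using odd_closed_walk_shortcut[OF sym X r _ _ w] by blast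
    then show False using shortest[of n f c] that by linarith
  qed
  then have inj: "inj_on X {..<r}" by (metis inj_onI lessThan_iff linorder_neqE_nat)
  have chord: "j = i + 1 \<or> (i = 0 \<and> j = r - 1)" if "i < j" "j < r" "E (X i) (X j)" for i j
  proof -
    have "X i \<in> S" "X j \<in> S" using that step[of i] step[of j] by auto
    then have w: "walk E S 1 (\<lambda>k. if k = 0 then X i else X j) (X i) (X j)"
      using that(3) by (rule walk_edge)
    have "i \<le> j" "j \<le> r" using that by auto
    then obtain n f c where "odd n" "walk E S n f c c" "n = j - i + 1 \<or> n = i + 1 + (r - j)"
      using odd_closed_walk_shortcut[OF sym X r _ _ w] by blast
    then show ?thesis using shortest[of n f c] that by linarith
  qed
  have "E (X i) (X j) \<longleftrightarrow> (j = (i + 1) mod r \<or> i = (j + 1) mod r)" if "i < r" "j < r" for i j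
  proof
    assume e: "E (X i) (X j)"
    show "j = (i + 1) mod r \<or> i = (j + 1) mod r"
      using chord[OF _ _ e] chord[OF _ _ sympD[OF sym e]] irreflpD[OF irr] e that r3
      by (cases i j rule: linorder_cases) auto
  next
    have "E (X k) (X ((k + 1) mod r))" if "k < r" for k
      using step[OF that] X0 that by (cases "k + 1 = r") auto
    then show "j = (i + 1) mod r \<or> i = (j + 1) mod r \<Longrightarrow> E (X i) (X j)"
      using that sympD[OF sym] by auto
  qed
  moreover have "X ` {..<r} \<subseteq> S" using step by auto
  ultimately show ?thesis using r r3 inj unfolding induced_odd_cycle_def by blast
qed

lemma odd_closed_walk_imp_induced_odd_cycle:
  assumes sym: "symp E" and irr: "irreflp E"
    and "walk E S n f a a" "odd n"
  shows "\<exists>r X. induced_odd_cycle E S r X"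
proof -
  define r where "r = (LEAST m. odd m \<and> (\<exists>f a. walk E S m f a a))"
  have "odd r \<and> (\<exists>f a. walk E S r f a a)"
    unfolding r_def by (rule LeastI[of _ n]) (use assms in blast)
  then obtain X b where "odd r" "walk E S r X b b" by blast
  moreover have "r \<le> m" if "odd m" "walk E S m g c c" for m g c
    unfolding r_def by (rule Least_le) (use that in blast)
  ultimately have "induced_odd_cycle E S r X"
    by (intro shortest_odd_closed_walk_induced_cycle[OF sym irr])
  then show ?thesis by blast
qed

lemma rtranclp_hom:
  assumes "\<And>a b. R a b \<Longrightarrow> R' (h a) (h b)" and "R\<^sup>*\<^sup>* x y"
  shows "R'\<^sup>*\<^sup>* (h x) (h y)"
  using assms(2) by induction (auto intro: rtranclp.rtrancl_into_rtrancl assms(1))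

locale graph_embedding =
  fixes h :: "'b \<Rightarrow> 'a" and VH :: "'b set" and EH :: "'b \<Rightarrow> 'b \<Rightarrow> bool" and E :: "'a \<Rightarrow> 'a \<Rightarrow> bool"
  assumes inj: "inj_on h VH"
    and edge_iff: "\<And>a b. a \<in> VH \<Longrightarrow> b \<in> VH \<Longrightarrow> EH a b \<longleftrightarrow> E (h a) (h b)"
begin

lemma image_Diff_singleton: "S \<subseteq> VH \<Longrightarrow> v \<in> VH \<Longrightarrow> h ` S - {h v} = h ` (S - {v})"
  using inj unfolding inj_on_def by auto

lemma connected_on_image_iff:
  assumes T: "T \<subseteq> VH"
  shows "connected_on E (h ` T) \<longleftrightarrow> connected_on EH T"
proof
  assume c: "connected_on E (h ` T)"
  define g where "g = inv_into VH h"
  have gh: "g (h x) = x" if "x \<in> T" for x unfolding g_def using inj that T by auto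
  show "connected_on EH T" unfolding connected_on_def
  proof (intro conjI ballI)
    fix x y assume x: "x \<in> T" and y: "y \<in> T"
    have "(edge_in E (h ` T))\<^sup>*\<^sup>* (h x) (h y)" using c x y unfolding connected_on_def by auto
    then have "(edge_in EH T)\<^sup>*\<^sup>* (g (h x)) (g (h y))"
    proof (rule rtranclp_hom[rotated])
      fix a b assume "edge_in E (h ` T) a b"
      then obtain a' b' where "a' \<in> T" "b' \<in> T" "a = h a'" "b = h b'" "E a b" by auto
      moreover have "a' \<in> VH" "b' \<in> VH" using calculation T by auto
      ultimately show "edge_in EH T (g a) (g b)" using gh edge_iff by auto
    qed
    then show "(edge_in EH T)\<^sup>*\<^sup>* x y" using gh x y by auto
  qed (use c in \<open>auto simp: connected_on_def\<close>)
next
  assume c: "connected_on EH T"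
  show "connected_on E (h ` T)" unfolding connected_on_def
  proof (intro conjI ballI)
    fix x' y' assume "x' \<in> h ` T" "y' \<in> h ` T"
    then obtain x y where xy: "x \<in> T" "y \<in> T" "x' = h x" "y' = h y" by auto
    have "(edge_in EH T)\<^sup>*\<^sup>* x y" using c xy unfolding connected_on_def by auto
    then show "(edge_in E (h ` T))\<^sup>*\<^sup>* x' y'"
      unfolding xy by (rule rtranclp_hom[rotated]) (use T edge_iff in auto)
  qed (use c in \<open>auto simp: connected_on_def\<close>)
qed

lemma legal_move_image_iff:
  assumes "S \<subseteq> VH" "v \<in> S"
  shows "legal_move E (h ` S) (h v) \<longleftrightarrow> legal_move EH S v"
proof -
  have "h ` S - {h v} = h ` (S - {v})" using image_Diff_singleton assms by auto
  then show ?thesis using assms connected_on_image_iff[of "S - {v}"] unfolding legal_move_def by auto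
qed

lemma guarantees_image:
  assumes w: "\<And>a. a \<in> VH \<Longrightarrow> wH a = w (h a)"
  shows "guarantees EH wH T k \<Longrightarrow> T \<subseteq> VH \<Longrightarrow> guarantees E w (h ` T) k"
proof (induction rule: guarantees.induct)
  case (empty k)
  then show ?case by (simp add: guarantees.empty)
next
  case (move S v k)
  have v: "v \<in> S" using move(1) unfolding legal_move_def by auto
  have Sv: "h ` S - {h v} = h ` (S - {v})" using image_Diff_singleton move(5) v by auto
  show ?case
  proof (rule guarantees.move)
    show "legal_move E (h ` S) (h v)" using legal_move_image_iff move(1,5) v by blast
    show "h ` S - {h v} = {} \<Longrightarrow> k \<le> w (h v)" using move(2) Sv w v move(5) by auto
    fix u' assume ne: "h ` S - {h v} \<noteq> {}" and u': "legal_move E (h ` S - {h v}) u'"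
    then obtain u where u: "u \<in> S - {v}" "u' = h u" unfolding Sv legal_move_def by auto
    have "legal_move EH (S - {v}) u"
      using u' u legal_move_image_iff[of "S - {v}" u] move(5) unfolding Sv by auto
    moreover have "S - {v} \<noteq> {}" using ne Sv by auto
    ultimately have "guarantees E w (h ` (S - {v} - {u})) (k - wH v)" using move(4,5) by blast
    moreover have "h ` (S - {v}) - {h u} = h ` (S - {v} - {u})"
      using image_Diff_singleton[of "S - {v}" u] u move(5) by auto
    ultimately show "guarantees E w (h ` S - {h v} - {u'}) (k - w (h v))"
      using Sv u w v move(5) by auto
  qed
qed

end

definition alice_wins_even_bipartite_01 :: bool where
  "alice_wins_even_bipartite_01 \<longleftrightarrow> (\<forall>(VH :: nat set) EH (wH :: nat \<Rightarrow> real).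
     simple_graph VH EH \<longrightarrow> connected_on EH VH \<longrightarrow> bipartite VH EH \<longrightarrow> even (card VH) \<longrightarrow>
     (\<forall>v\<in>VH. wH v \<in> {0, 1}) \<longrightarrow> alice_wins VH EH wH)"

lemma guarantees_half_bipartite:
  assumes bip: "alice_wins_even_bipartite_01"
    and sym: "symp E" and irr: "irreflp E"
    and fin: "finite S" and c: "connected_on E S" and b: "bipartite S (edge_in E S)"
    and ev: "even (card S)" and wt: "\<forall>v\<in>S. w v \<in> {0, 1}"
  shows "guarantees E w S (sum w S / 2)"
proof -
  obtain h where h: "bij_betw h {0..<card S} S" using ex_bij_betw_nat_finite[OF fin] by blast
  define VH where "VH = {0..<card S}"
  define EH where "EH a b \<longleftrightarrow> a \<in> VH \<and> b \<in> VH \<and> E (h a) (h b)" for a b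
  define wH where "wH a = w (h a)" for a
  have inj: "inj_on h VH" and img: "h ` VH = S"
    using h unfolding VH_def by (auto simp: bij_betw_def)
  interpret graph_embedding h VH EH E
    by unfold_locales (auto simp: inj EH_def)
  obtain A where A: "\<forall>x y. edge_in E S x y \<longrightarrow> (x \<in> A \<longleftrightarrow> y \<notin> A)"
    using b unfolding bipartite_def by blast
  have "simple_graph VH EH" unfolding simple_graph_def EH_def VH_def using sympD[OF sym] irreflpD[OF irr] by auto
  moreover have "connected_on EH VH" using connected_on_image_iff c img by blast
  moreover have "bipartite VH EH" unfolding bipartite_def
    by (rule exI[of _ "{a. h a \<in> A}"]) (use A img in \<open>auto simp: EH_def\<close>)
  moreover have "even (card VH)" "\<forall>v\<in>VH. wH v \<in> {0, 1}"
    using ev wt img unfolding VH_def wH_def by auto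
  ultimately have "guarantees EH wH VH (sum wH VH / 2)"
    using bip unfolding alice_wins_even_bipartite_01_def alice_wins_def by blast
  then have "guarantees E w S (sum wH VH / 2)"
    using guarantees_image[of wH w VH] img by (auto simp: wH_def)
  moreover have "sum wH VH = sum w S" using sum.reindex[OF inj, of w] img unfolding wH_def by simp
  ultimately show ?thesis by simp
qed

lemma induced_odd_cycle_reach_without_vertex:
  assumes cyc: "induced_odd_cycle E S r X" and ij: "i < r" "j < r" "j \<noteq> i"
  shows "(edge_in E (S - {X i}))\<^sup>*\<^sup>* (X (Suc i mod r)) (X j)"
proof -
  let ?R = "edge_in E (S - {X i})"
  note cycD = induced_odd_cycleD[OF cyc]
  have edge: "E (X a) (X (Suc a mod r))" if "a < r" for a
    using cycD(5)[OF that, of "Suc a mod r"] cycD(2) by simp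
  have mod_r: "a mod r = (if a < r then a else a - r)" if "a < 2 * r" for a
    using that by (simp add: le_mod_geq)
  have other: "X ((Suc i + t) mod r) \<in> S - {X i}" if "t < r - 1" for t
  proof -
    have "(Suc i + t) mod r \<noteq> i" "(Suc i + t) mod r < r" using mod_r[of "Suc i + t"] that ij by auto
    then show ?thesis using cycD(3,4) ij unfolding inj_on_def by auto
  qed
  have path: "?R\<^sup>*\<^sup>* (X (Suc i mod r)) (X ((Suc i + t) mod r))" if "t < r - 1" for t
    using that
  proof (induction t)
    case (Suc t)
    have "E (X ((Suc i + t) mod r)) (X ((Suc i + Suc t) mod r))"
      using edge[of "(Suc i + t) mod r"] cycD(2) by (simp add: mod_Suc_eq)
    then have "?R (X ((Suc i + t) mod r)) (X ((Suc i + Suc t) mod r))"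
      using other[of t] other[of "Suc t"] Suc.prems by auto
    then show ?case using Suc by (auto intro: rtranclp.rtrancl_into_rtrancl)
  qed simp
  define t where "t = (if i < j then j - Suc i else j + r - Suc i)"
  have "t < r - 1" "(Suc i + t) mod r = j" using ij mod_r[of "Suc i + t"] unfolding t_def by auto
  then show ?thesis using path[of t] by simp
qed

lemma induced_odd_cycle_cut_vertices_corona:
  assumes sym: "symp E" and irr: "irreflp E"
    and c: "connected_on E S" and cyc: "induced_odd_cycle E S r X"
    and cut: "\<And>i. i < r \<Longrightarrow> \<not> connected_on E (S - {X i})"
  shows "has_induced_odd_cycle_corona S E"
proof -
  let ?R = "\<lambda>i. edge_in E (S - {X i})" and ?C = "\<lambda>i. X (Suc i mod r)"
  note r = induced_odd_cycleD(1,2)[OF cyc] and inj = induced_odd_cycleD(3)[OF cyc]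
    and XS_i = induced_odd_cycleD(4)[OF cyc]
  have X_ne: "X i \<noteq> X j" if "i < r" "j < r" "i \<noteq> j" for i j
    using inj that unfolding inj_on_def by auto
  have C: "?C i \<in> S - {X i}" if "i < r" for i
  proof -
    have "Suc i mod r \<noteq> i" "Suc i mod r < r" using that r(2) by (simp_all add: mod_Suc)
    then show ?thesis using XS_i X_ne[of "Suc i mod r" i] that by auto
  qed
  define Y where "Y i = (SOME y. y \<in> S - {X i} \<and> E (X i) y \<and> \<not> (?R i)\<^sup>*\<^sup>* (?C i) y)" for i
  have Y: "Y i \<in> S - {X i} \<and> E (X i) (Y i) \<and> \<not> (?R i)\<^sup>*\<^sup>* (?C i) (Y i)" if "i < r" for i
  proof -
    have "\<exists>y. y \<in> S - {X i} \<and> E (X i) y \<and> \<not> (?R i)\<^sup>*\<^sup>* (?C i) y"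
      using cut_vertex_neighbour_outside_component[OF c sym XS_i[OF that] C[OF that] cut[OF that]]
      by blast
    then show ?thesis unfolding Y_def by (rule someI_ex)
  qed
  have reach_X: "(?R j)\<^sup>*\<^sup>* (?C j) (X i)" if "i < r" "j < r" "i \<noteq> j" for i j
    using induced_odd_cycle_reach_without_vertex[OF cyc that(2,1,3)] .
  have separated: "\<not> (?R j)\<^sup>*\<^sup>* (?C j) z" if "j < r" "z \<in> S - {X j}" "E z (Y j)" for j z
  proof
    assume "(?R j)\<^sup>*\<^sup>* (?C j) z"
    moreover have "?R j z (Y j)" using Y[OF that(1)] that(2,3) by blast
    ultimately have "(?R j)\<^sup>*\<^sup>* (?C j) (Y j)" by (rule rtranclp.rtrancl_into_rtrancl)
    then show False using Y[OF that(1)] by blast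
  qed
  have YX: "Y i \<noteq> X j" if "i < r" "j < r" for i j
  proof (cases "i = j")
    case False
    then have "(?R i)\<^sup>*\<^sup>* (?C i) (X j)" using reach_X[OF that(2,1)] by auto
    then show ?thesis using Y[OF that(1)] by auto
  qed (use Y[OF that(1)] in blast)
  have reach_Y: "(?R j)\<^sup>*\<^sup>* (?C j) (Y i)" if "i < r" "j < r" "i \<noteq> j" for i j
  proof -
    have "?R j (X i) (Y i)" using Y[OF that(1)] YX[OF that(1,2)] XS_i[OF that(1)] X_ne[OF that] by blast
    with reach_X[OF that] show ?thesis by (rule rtranclp.rtrancl_into_rtrancl)
  qed
  have injY: "inj_on Y {..<r}"
  proof (rule inj_onI, rule ccontr)
    fix i j assume ij: "i \<in> {..<r}" "j \<in> {..<r}" "Y i = Y j" "i \<noteq> j"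
    then have "(?R j)\<^sup>*\<^sup>* (?C j) (Y j)" using reach_Y[of i j] by auto
    then show False using Y ij(2) by blast
  qed
  have XY: "\<forall>i<r. \<forall>j<r. E (X i) (Y j) \<longleftrightarrow> i = j"
  proof (intro allI impI iffI)
    fix i j assume ij: "i < r" "j < r" and e: "E (X i) (Y j)"
    show "i = j"
    proof (rule ccontr)
      assume ne: "i \<noteq> j"
      then have "X i \<in> S - {X j}" using XS_i[OF ij(1)] X_ne[OF ij] by blast
      then show False using separated[OF ij(2) _ e] reach_X[OF ij ne] by blast
    qed
  qed (use Y in blast)
  have YY: "\<forall>i<r. \<forall>j<r. \<not> E (Y i) (Y j)"
  proof (intro allI impI notI)
    fix i j assume ij: "i < r" "j < r" and e: "E (Y i) (Y j)"
    then have ne: "i \<noteq> j" using irreflpD[OF irr] by blast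
    have "Y i \<in> S - {X j}" using Y[OF ij(1)] YX[OF ij] by blast
    then show False using separated[OF ij(2) _ e] reach_Y[OF ij ne] by blast
  qed
  have YX': "\<forall>i<r. \<forall>j<r. E (Y i) (X j) \<longleftrightarrow> i = j" using XY sympD[OF sym] by blast
  have disj: "X ` {..<r} \<inter> Y ` {..<r} = {}" using YX by force
  have XS: "X ` {..<r} \<subseteq> S" and YS: "Y ` {..<r} \<subseteq> S" using XS_i Y by auto
  have XX: "\<forall>i<r. \<forall>j<r. E (X i) (X j) \<longleftrightarrow> (j = (i + 1) mod r \<or> i = (j + 1) mod r)"
    using induced_odd_cycleD(5)[OF cyc] by simp
  show ?thesis unfolding has_induced_odd_cycle_corona_def
    by (intro exI[of _ r] exI[of _ X] exI[of _ Y] conjI) (rule r inj injY disj XS YS XX XY YX' YY)+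
qed

lemma has_induced_odd_cycle_corona_mono:
  assumes "has_induced_odd_cycle_corona S E" "S \<subseteq> V"
  shows "has_induced_odd_cycle_corona V E"
proof -
  note subs = subset_trans[OF _ assms(2)]
  show ?thesis using assms(1) unfolding has_induced_odd_cycle_corona_def
    by (elim exE conjE, intro exI conjI) (assumption | erule subs)+
qed

lemma legal_move_after_non_leaf:
  assumes sym: "symp E" and irr: "irreflp E"
    and v: "legal_move E S v" and z: "z \<in> S" "z' \<in> S" "E v z" "E v z'" "z \<noteq> z'"
    and u: "legal_move E (S - {v}) u"
  shows "legal_move E S u"
proof -
  have uS: "u \<in> S" "u \<noteq> v" using u unfolding legal_move_def by auto
  obtain y where y: "y \<in> S - {v} - {u}" "E v y" using z irreflpD[OF irr] uS by blast
  then have "connected_on E (S - {v} - {u})" using u unfolding legal_move_def by auto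
  then have "connected_on E (insert v (S - {v} - {u}))"
    using connected_on_insert[OF sym] y by blast
  moreover have "insert v (S - {v} - {u}) = S - {u}" using uS v unfolding legal_move_def by auto
  ultimately show ?thesis using uS unfolding legal_move_def by auto
qed

definition safe_move :: "('a \<Rightarrow> 'a \<Rightarrow> bool) \<Rightarrow> ('a \<Rightarrow> real) \<Rightarrow> 'a set \<Rightarrow> 'a \<Rightarrow> bool" where
  "safe_move E w S v \<longleftrightarrow> legal_move E S v \<and> (\<forall>u. legal_move E (S - {v}) u \<longrightarrow> w u \<le> w v)"

lemma safe_move_exists:
  assumes sym: "symp E" and irr: "irreflp E"
    and c: "connected_on E S" and cyc: "induced_odd_cycle E S r X"
    and free: "\<not> has_induced_odd_cycle_corona S E" and wt: "\<forall>v\<in>S. w v \<in> {0, 1}"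
  shows "\<exists>v. safe_move E w S v"
proof (rule ccontr)
  assume none: "\<nexists>v. safe_move E w S v"
  note cycD = induced_odd_cycleD[OF cyc]
  have light: "w v = 0" if v: "legal_move E S v" for v
  proof (rule ccontr)
    assume "w v \<noteq> 0"
    then have "w v = 1" using wt v unfolding legal_move_def by auto
    moreover have "w u \<le> 1" if "legal_move E (S - {v}) u" for u
      using wt that unfolding legal_move_def by auto
    ultimately have "safe_move E w S v" using v unfolding safe_move_def by simp
    then show False using none by blast
  qed
  have leaf: "z = z'" if v: "legal_move E S v" and z: "z \<in> S" "z' \<in> S" "E v z" "E v z'" for v z z'
  proof (rule ccontr)
    assume "z \<noteq> z'"
    then have "w u \<le> w v" if "legal_move E (S - {v}) u" for u
      using light[OF legal_move_after_non_leaf[OF sym irr v z \<open>z \<noteq> z'\<close> that]] light[OF v] by simp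
    then have "safe_move E w S v" using v unfolding safe_move_def by blast
    then show False using none by blast
  qed
  \<comment> \<open>A removable vertex would be a leaf, but a cycle vertex has two distinct neighbours.\<close>
  have "\<not> connected_on E (S - {X i})" if i: "i < r" for i
  proof
    assume "connected_on E (S - {X i})"
    then have X_legal: "legal_move E S (X i)" using cycD(4)[OF i] unfolding legal_move_def by blast
    define p where "p = (if i = 0 then r - 1 else i - 1)"
    have p: "Suc i mod r < r" "p < r" "Suc i mod r \<noteq> p" "i = Suc p mod r"
      using i cycD(2) unfolding p_def by (auto simp: mod_Suc)
    then have "E (X i) (X (Suc i mod r))" "E (X i) (X p)" using cycD(5) i by auto
    then have "X (Suc i mod r) = X p" using leaf[OF X_legal cycD(4) cycD(4)] p by blast
    then show False using cycD(3) p unfolding inj_on_def by auto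
  qed
  then show False using induced_odd_cycle_cut_vertices_corona[OF sym irr c cyc] free by blast
qed

lemma guarantees_mono:
  assumes "guarantees E w S k" "k' \<le> k"
  shows "guarantees E w S k'"
  using assms
proof (induction arbitrary: k' rule: guarantees.induct)
  case (empty k)
  then show ?case by (intro guarantees.empty) simp
next
  case (move S v k)
  show ?case
  proof (rule guarantees.move[OF move(1)])
    show "S - {v} = {} \<Longrightarrow> k' \<le> w v" using move by force
    fix u assume "S - {v} \<noteq> {}" "legal_move E (S - {v}) u"
    then show "guarantees E w (S - {v} - {u}) (k' - w v)" using move by force
  qed
qed

lemma guarantees_half_by_safe_move:
  assumes fin: "finite S" and ev: "even (card S)" and v: "safe_move E w S v"
    and smaller: "\<And>T. T \<subset> S \<Longrightarrow> connected_on E T \<Longrightarrow> even (card T) \<Longrightarrow>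
      guarantees E w T (sum w T / 2)"
  shows "guarantees E w S (sum w S / 2)"
proof -
  have v_legal: "legal_move E S v" and vS: "v \<in> S" using v unfolding safe_move_def legal_move_def by auto
  show ?thesis
  proof (rule guarantees.move[OF v_legal])
    assume "S - {v} = {}"
    then have "S = {v}" using vS by auto
    then show "sum w S / 2 \<le> w v" using ev by simp
  next
    fix u assume "S - {v} \<noteq> {}" and u: "legal_move E (S - {v}) u"
    have uS: "u \<in> S - {v}" and wu: "w u \<le> w v" using u v unfolding safe_move_def legal_move_def by auto
    define T where "T = S - {v} - {u}"
    have "sum w S = w v + sum w (S - {v})" using sum.remove[OF fin vS] .
    also have "sum w (S - {v}) = w u + sum w T" unfolding T_def using fin uS by (simp add: sum.remove)
    finally have sum_S: "sum w S = w v + w u + sum w T" by simp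
    show "guarantees E w (S - {v} - {u}) (sum w S / 2 - w v)"
    proof (cases "T = {}")
      case True
      then have "sum w S / 2 - w v \<le> 0" using sum_S wu by simp
      then show ?thesis using True unfolding T_def[symmetric] by (simp add: guarantees.empty)
    next
      case False
      have "T \<subset> S" using vS unfolding T_def by auto
      moreover have "connected_on E T" using u False unfolding T_def legal_move_def by auto
      moreover have "card S = card T + 2"
        using fin vS uS card_mono[OF fin, of "{u, v}"] unfolding T_def by (auto simp: card_Diff_singleton)
      then have "even (card T)" using ev by simp
      ultimately have "guarantees E w T (sum w T / 2)" using smaller by blast
      moreover have "sum w S / 2 - w v \<le> sum w T / 2" using sum_S wu by linarith
      ultimately show ?thesis unfolding T_def[symmetric] by (rule guarantees_mono)
    qed
  qed
qed

lemma guarantees_half_corona_free: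
  assumes bip: "alice_wins_even_bipartite_01" and G: "simple_graph V E"
    and free: "\<not> has_induced_odd_cycle_corona V E" and wt: "\<forall>v\<in>V. w v \<in> {0, 1}"
    and S: "S \<subseteq> V" "connected_on E S" "even (card S)"
  shows "guarantees E w S (sum w S / 2)"
proof -
  have sym: "symp E" and irr: "irreflp E" and "finite V"
    using G unfolding simple_graph_def by (auto intro: sympI irreflpI)
  then have "finite S" using S(1) finite_subset by blast
  then show ?thesis using S
  proof (induction S rule: finite_psubset_induct)
    case (psubset S)
    have wS: "\<forall>v\<in>S. w v \<in> {0, 1}" using wt psubset.prems(1) by auto
    consider "bipartite S (edge_in E S)" | n f a where "odd n" "walk E S n f a a"
      using bipartite_or_odd_closed_walk[OF sym psubset.prems(2)] by blast
    then show ?case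
    proof cases
      case 1
      then show ?thesis using guarantees_half_bipartite[OF bip sym irr] psubset wS by blast
    next
      case 2
      then obtain r X where "induced_odd_cycle E S r X"
        using odd_closed_walk_imp_induced_odd_cycle[OF sym irr] by blast
      moreover have "\<not> has_induced_odd_cycle_corona S E"
        using free has_induced_odd_cycle_corona_mono psubset.prems(1) by blast
      ultimately obtain v where "safe_move E w S v"
        using safe_move_exists[OF sym irr psubset.prems(2)] wS by blast
      then show ?thesis
        using guarantees_half_by_safe_move psubset by (meson order.trans psubset_imp_subset)
    qed
  qed
qed

theorem mainTheorem1:
  fixes V :: "'a set" and E :: "'a \<Rightarrow> 'a \<Rightarrow> bool" and w :: "'a \<Rightarrow> real"
  assumes bip: "\<And>(VH :: nat set) EH (wH :: nat \<Rightarrow> real).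
      \<lbrakk> simple_graph VH EH; connected_on EH VH; bipartite VH EH; even (card VH);
        \<forall>v\<in>VH. wH v \<in> {0, 1} \<rbrakk> \<Longrightarrow> alice_wins VH EH wH"
  and G: "simple_graph V E" and conn: "connected_on E V" and ev: "even (card V)"
  and free: "\<not> has_induced_odd_cycle_corona V E"
  and wt: "\<forall>v\<in>V. w v \<in> {0, 1}"
  shows "alice_wins V E w"
proof -
  have "alice_wins_even_bipartite_01" using bip unfolding alice_wins_even_bipartite_01_def by blast
  then show ?thesis
    unfolding alice_wins_def using guarantees_half_corona_free[OF _ G free wt] conn ev by blast
qed

end
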